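(* Let $\mathbb N^n$ be the free commutative monoid on generators $a_1,\dots,a_n$, let $T^n\subset\mathbb N^n$ be the set of products $a_{i_1}a_{i_2}\cdots a_{i_k}$ with $1\leqslant i_1<\dots<i_k\leqslant n$ (including the empty product $1$), and let $\mathfrak FT^n$ be the full subcategory of $\mathfrak F\mathbb N^n$ with object set $T^n$. Then the inclusion $\mathfrak FT^n\subset\mathfrak F\mathbb N^n$ is strong coinitial.
   Context: For a monoid $M$, $\mathfrak FM$ has objects the elements of $M$ and morphisms $\alpha\to\beta$ the pairs $(f,g)$ with $g\alpha f=\beta$; composition $(f_2,g_2)\circ(f_1,g_1)=(f_1f_2,g_2g_1)$. A functor $S:\mathcal C\to\mathcal D$ of small categories is strong coinitial if for every object $d$ the comma category $S/d$ (objects $(c,\alpha:S(c)\to d)$; morphisms $f:c_1\to c_2$ with $\alpha_2\circ S(f)=\alpha_1$) is connected and satisfies $\varinjlim{}_q^{S/d}\Delta\mathbb Z=0$ for $q>0$, where $\Delta\mathbb Z$ is the constant functor with value $\mathbb Z$ and $\varinjlim{}_q$ the left derived functors of the colimit. *)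

theory Defs
  imports "HOL-Algebra.Group"
begin

record ('o,'m) cat =
  Obj :: "'o set"
  Arr :: "'m set"
  Dom :: "'m \<Rightarrow> 'o"
  Cod :: "'m \<Rightarrow> 'o"
  Comp :: "'m \<Rightarrow> 'm \<Rightarrow> 'm"   (* Comp g f = g \<circ> f *)
  Ident :: "'o \<Rightarrow> 'm"

text \<open>An arrow \<open>(f,g) : \<alpha> \<rightarrow> \<beta>\<close> with \<open>g \<alpha> f = \<beta>\<close> is represented by the triple
  \<open>(\<alpha>, f, g)\<close>; its codomain is \<open>g \<alpha> f\<close>.\<close>

definition FCat :: "('a,'b) monoid_scheme \<Rightarrow> ('a, 'a \<times> 'a \<times> 'a) cat" where
  "FCat M = \<lparr> Obj = carrier M,
              Arr = carrier M \<times> carrier M \<times> carrier M,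
              Dom = (\<lambda>(\<alpha>,f,g). \<alpha>),
              Cod = (\<lambda>(\<alpha>,f,g). g \<otimes>\<^bsub>M\<^esub> \<alpha> \<otimes>\<^bsub>M\<^esub> f),
              Comp = (\<lambda>(\<beta>,f2,g2) (\<alpha>,f1,g1). (\<alpha>, f1 \<otimes>\<^bsub>M\<^esub> f2, g2 \<otimes>\<^bsub>M\<^esub> g1)),
              Ident = (\<lambda>\<alpha>. (\<alpha>, \<one>\<^bsub>M\<^esub>, \<one>\<^bsub>M\<^esub>)) \<rparr>"

definition full_subcat :: "('o,'m) cat \<Rightarrow> 'o set \<Rightarrow> ('o,'m) cat" where
  "full_subcat C S = C \<lparr> Obj := S,
       Arr := {f \<in> Arr C. Dom C f \<in> S \<and> Cod C f \<in> S} \<rparr>"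

definition comma ::
  "('o,'m) cat \<Rightarrow> ('p,'n) cat \<Rightarrow> ('o \<Rightarrow> 'p) \<Rightarrow> ('m \<Rightarrow> 'n) \<Rightarrow> 'p
     \<Rightarrow> ('o \<times> 'n, 'm \<times> ('o \<times> 'n) \<times> ('o \<times> 'n)) cat" where
  "comma C D So Sa d =
     (let ob = {(c, \<alpha>). c \<in> Obj C \<and> \<alpha> \<in> Arr D \<and> Dom D \<alpha> = So c \<and> Cod D \<alpha> = d} in
     \<lparr> Obj = ob,
       Arr = {(f, x, y). x \<in> ob \<and> y \<in> ob \<and> f \<in> Arr C \<and> Dom C f = fst x \<and> Cod C f = fst y
                 \<and> Comp D (snd y) (Sa f) = snd x},
       Dom = (\<lambda>(f, x, y). x),
       Cod = (\<lambda>(f, x, y). y),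
       Comp = (\<lambda>(g, y, z) (f, x, y'). (Comp C g f, x, z)),
       Ident = (\<lambda>x. (Ident C (fst x), x, x)) \<rparr>)"

definition connected_cat :: "('o,'m) cat \<Rightarrow> bool" where
  "connected_cat C \<longleftrightarrow> Obj C \<noteq> {} \<and>
     (\<forall>x\<in>Obj C. \<forall>y\<in>Obj C.
        (\<lambda>a b. \<exists>f\<in>Arr C. (Dom C f = a \<and> Cod C f = b) \<or> (Dom C f = b \<and> Cod C f = a))\<^sup>*\<^sup>* x y)"

fun composable :: "('o,'m) cat \<Rightarrow> 'o \<Rightarrow> 'm list \<Rightarrow> bool" where
  "composable C c [] = True"
| "composable C c (f # fs) = (f \<in> Arr C \<and> Dom C f = c \<and> composable C (Cod C f) fs)"

text \<open>An \<open>n\<close>-simplex \<open>c0 \<rightarrow> c1 \<rightarrow> \<dots> \<rightarrow> cn\<close> of the nerve is \<open>(c0, [f1,\<dots>,fn])\<close>.\<close>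

definition nerve :: "('o,'m) cat \<Rightarrow> nat \<Rightarrow> ('o \<times> 'm list) set" where
  "nerve C n = {(c, fs). c \<in> Obj C \<and> length fs = n \<and> composable C c fs}"

definition face :: "('o,'m) cat \<Rightarrow> nat \<Rightarrow> 'o \<times> 'm list \<Rightarrow> 'o \<times> 'm list" where
  "face C i s = (let (c, fs) = s; n = length fs in
     if i = 0 then (Cod C (hd fs), tl fs)
     else if i = n then (c, butlast fs)
     else (c, take (i - 1) fs @ [Comp C (fs ! i) (fs ! (i - 1))] @ drop (i + 1) fs))"

definition chains :: "('o,'m) cat \<Rightarrow> nat \<Rightarrow> ('o \<times> 'm list \<Rightarrow> int) set" where
  "chains C n = {x. finite {s. x s \<noteq> 0} \<and> {s. x s \<noteq> 0} \<subseteq> nerve C n}"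

definition boundary :: "('o,'m) cat \<Rightarrow> nat \<Rightarrow> ('o \<times> 'm list \<Rightarrow> int) \<Rightarrow> ('o \<times> 'm list \<Rightarrow> int)" where
  "boundary C n x = (\<lambda>t. \<Sum>s\<in>{s. x s \<noteq> 0}. \<Sum>i\<in>{0..n}.
       if face C i s = t then (-1) ^ i * x s else 0)"

text \<open>\<open>colim_q^C \<Delta>\<int> = H_q(N C; \<int>)\<close>; vanishing in degree \<open>q \<ge> 1\<close>.\<close>

definition colim_Z_vanishes :: "('o,'m) cat \<Rightarrow> nat \<Rightarrow> bool" where
  "colim_Z_vanishes C q \<longleftrightarrow>
     (\<forall>x\<in>chains C q. boundary C q x = (\<lambda>_. 0) \<longrightarrow>
        (\<exists>y\<in>chains C (Suc q). boundary C (Suc q) y = x))"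

definition strong_coinitial ::
  "('o,'m) cat \<Rightarrow> ('p,'n) cat \<Rightarrow> ('o \<Rightarrow> 'p) \<Rightarrow> ('m \<Rightarrow> 'n) \<Rightarrow> bool" where
  "strong_coinitial C D So Sa \<longleftrightarrow>
     (\<forall>d\<in>Obj D. connected_cat (comma C D So Sa d) \<and>
        (\<forall>q>0. colim_Z_vanishes (comma C D So Sa d) q))"

text \<open>Elements of \<open>\<nat>^n\<close> are exponent vectors \<open>nat \<Rightarrow> nat\<close> supported on \<open>{..<n}\<close>;
  generator \<open>a_{i+1}\<close> is the indicator of \<open>i\<close>; the product is pointwise addition.\<close>

definition Nmon :: "nat \<Rightarrow> (nat \<Rightarrow> nat) monoid" where
  "Nmon n = \<lparr> carrier = {a. \<forall>i\<ge>n. a i = 0}, mult = (\<lambda>a b j. a j + b j), one = (\<lambda>_. 0) \<rparr>"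

definition Tset :: "nat \<Rightarrow> (nat \<Rightarrow> nat) set" where
  "Tset n = {(\<lambda>j. if j \<in> I then 1 else 0) | I. I \<subseteq> {..<n}}"

end

theory Submission
  imports Defs "HOL-Library.Poly_Mapping" "HOL-Algebra.Divisibility"
begin

(* Because N^n is cancellative, an arrow (c1, (c1, f1, g1)) -> (c2, (c2, f2, g2)) of S/d, i.e. a
   triple (c1, h, k) with f1 = h f2 and g1 = g2 k, is unique if it exists: S/d is a preorder. The
   simplices of its nerve are then the weakly increasing lists of objects, and the homology of the
   nerve is that of the complex of ordered chains of sorted lists.

   An object of S/d is a factorisation d = g c f with c squarefree. Coordinatewise it is determined
   by its height 2 f_j + c_j, and in these coordinates the preorder is a product of fences
   0 < 1 > 2 < 3 > ... . Truncating every height at K is a monotone self-map Phi_K of S/d; Phi_K and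
   Phi_(K+1) are comparable, Phi_0 is constant with value d = d 1 1, and Phi_N is the identity for
   large N. Comparable monotone maps induce chain homotopic maps (prism operator), and a cycle all
   of whose vertices lie below one object bounds its cone. Hence every cycle of positive degree
   bounds, and the zigzag Phi_0, ..., Phi_N connects every object to d = d 1 1. *)

section \<open>Ordered chains of lists\<close>

definition del_nth :: "nat \<Rightarrow> 'a list \<Rightarrow> 'a list" where
  "del_nth j L = take j L @ drop (Suc j) L"

definition frag_map :: "('a \<Rightarrow> 'b) \<Rightarrow> ('a \<Rightarrow>\<^sub>0 int) \<Rightarrow> ('b \<Rightarrow>\<^sub>0 int)" where
  "frag_map f = frag_extend (frag_of \<circ> f)"

definition list_boundary :: "'a list \<Rightarrow> 'a list \<Rightarrow>\<^sub>0 int" where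
  "list_boundary L = (\<Sum>j<length L. frag_cmul ((-1)^j) (frag_of (del_nth j L)))"

definition chain_boundary :: "('a list \<Rightarrow>\<^sub>0 int) \<Rightarrow> ('a list \<Rightarrow>\<^sub>0 int)" where
  "chain_boundary = frag_extend list_boundary"

(* The prism operator: list_prism p q [v0, ..., vn] is the alternating sum over i of
   [p v0, ..., p vi, q vi, ..., q vn]. *)
fun list_prism :: "('a \<Rightarrow> 'b) \<Rightarrow> ('a \<Rightarrow> 'b) \<Rightarrow> 'a list \<Rightarrow> 'b list \<Rightarrow>\<^sub>0 int" where
  "list_prism p q [] = 0"
| "list_prism p q (c # r) =
     frag_of (p c # q c # map q r) - frag_map (Cons (p c)) (list_prism p q r)"

definition chain_prism :: "('a \<Rightarrow> 'b) \<Rightarrow> ('a \<Rightarrow> 'b) \<Rightarrow> ('a list \<Rightarrow>\<^sub>0 int) \<Rightarrow> ('b list \<Rightarrow>\<^sub>0 int)" where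
  "chain_prism p q = frag_extend (list_prism p q)"

lemma frag_cmul_diff: "frag_cmul k (a - b) = frag_cmul k a - frag_cmul k b"
  by (rule poly_mapping_eqI) (simp add: lookup_minus algebra_simps)

lemma del_nth_Cons_0 [simp]: "del_nth 0 (v # L) = L"
  by (simp add: del_nth_def)

lemma del_nth_Cons_Suc [simp]: "del_nth (Suc j) (v # L) = v # del_nth j L"
  by (simp add: del_nth_def)

lemma frag_map_of [simp]: "frag_map f (frag_of x) = frag_of (f x)"
  by (simp add: frag_map_def)

lemma frag_map_0 [simp]: "frag_map f 0 = 0"
  by (simp add: frag_map_def)

lemma frag_map_diff: "frag_map f (a - b) = frag_map f a - frag_map f b"
  by (simp add: frag_map_def frag_extend_diff)

lemma frag_map_add: "frag_map f (a + b) = frag_map f a + frag_map f b"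
  by (simp add: frag_map_def frag_extend_add)

lemma keys_frag_map: "Poly_Mapping.keys (frag_map f x) \<subseteq> f ` Poly_Mapping.keys x"
  using keys_frag_extend[of "frag_of \<circ> f" x] by (auto simp: frag_map_def keys_frag_of)

lemma frag_map_id_on_keys:
  assumes "\<And>x. x \<in> Poly_Mapping.keys c \<Longrightarrow> f x = x"
  shows "frag_map f c = c"
proof -
  have "frag_map f c = frag_extend frag_of c"
    unfolding frag_map_def by (rule frag_extend_eq) (simp add: assms)
  then show ?thesis
    by (simp flip: frag_expansion)
qed

lemma chain_boundary_of [simp]: "chain_boundary (frag_of L) = list_boundary L"
  by (simp add: chain_boundary_def)

lemma chain_boundary_0 [simp]: "chain_boundary 0 = 0"
  by (simp add: chain_boundary_def)

lemma chain_boundary_diff: "chain_boundary (a - b) = chain_boundary a - chain_boundary b"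
  by (simp add: chain_boundary_def frag_extend_diff)

lemma chain_boundary_add: "chain_boundary (a + b) = chain_boundary a + chain_boundary b"
  by (simp add: chain_boundary_def frag_extend_add)

lemma chain_boundary_cmul: "chain_boundary (frag_cmul k a) = frag_cmul k (chain_boundary a)"
  by (simp add: chain_boundary_def frag_extend_cmul)

lemma chain_prism_of [simp]: "chain_prism p q (frag_of L) = list_prism p q L"
  by (simp add: chain_prism_def)

lemma chain_prism_0 [simp]: "chain_prism p q 0 = 0"
  by (simp add: chain_prism_def)

lemma chain_prism_diff: "chain_prism p q (a - b) = chain_prism p q a - chain_prism p q b"
  by (simp add: chain_prism_def frag_extend_diff)

lemma lookup_chain_boundary:
  "poly_mapping.lookup (chain_boundary Z) u
     = (\<Sum>L\<in>Poly_Mapping.keys Z. \<Sum>j<length L.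
          if u = del_nth j L then (-1)^j * poly_mapping.lookup Z L else 0)"
  by (simp add: chain_boundary_def frag_extend_def list_boundary_def lookup_sum sum_distrib_left
      if_distrib mult.commute cong: if_cong)

lemma keys_list_boundary: "Poly_Mapping.keys (list_boundary L) \<subseteq> (\<Union>j<length L. {del_nth j L})"
proof -
  have "Poly_Mapping.keys (list_boundary L)
      \<subseteq> (\<Union>j<length L. Poly_Mapping.keys (frag_cmul ((-1)^j) (frag_of (del_nth j L))))"
    unfolding list_boundary_def by (rule keys_sum)
  moreover have "Poly_Mapping.keys (frag_cmul ((-1)^j) (frag_of M)) = {M}" for j and M :: "'a list"
    using keys_cmul_iff[of _ "(-1)^j" "frag_of M"] by (simp add: keys_frag_of set_eq_iff)
  ultimately show ?thesis
    by simp
qed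

lemma list_boundary_Cons:
  "list_boundary (v # L) = frag_of L - frag_map (Cons v) (list_boundary L)"
proof -
  have "list_boundary (v # L)
      = frag_of L - (\<Sum>j<length L. frag_cmul ((-1)^j) (frag_of (v # del_nth j L)))"
    unfolding list_boundary_def
    by (simp only: length_Cons sum.lessThan_Suc_shift) (simp add: sum_negf[symmetric])
  also have "(\<Sum>j<length L. frag_cmul ((-1)^j) (frag_of (v # del_nth j L)))
      = frag_map (Cons v) (list_boundary L)"
    by (simp add: list_boundary_def frag_map_def frag_extend_sum frag_extend_cmul)
  finally show ?thesis .
qed

lemma list_boundary_map: "list_boundary (map f L) = frag_map (map f) (list_boundary L)"
  by (simp add: list_boundary_def frag_map_def frag_extend_sum frag_extend_cmul del_nth_def
      take_map drop_map)

lemma list_boundary_snoc: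
  "list_boundary (L @ [v])
     = frag_map (\<lambda>M. M @ [v]) (list_boundary L) + frag_cmul ((-1)^length L) (frag_of L)"
  by (simp add: list_boundary_def frag_map_def frag_extend_sum frag_extend_cmul del_nth_def)

lemma chain_boundary_Cons:
  "chain_boundary (frag_map (Cons v) x) = x - frag_map (Cons v) (chain_boundary x)"
  using subset_UNIV
  by (induction x rule: frag_induction)
     (auto simp: chain_boundary_diff frag_map_diff list_boundary_Cons)

lemma chain_boundary_map:
  "chain_boundary (frag_map (map f) x) = frag_map (map f) (chain_boundary x)"
  using subset_UNIV
  by (induction x rule: frag_induction)
     (auto simp: chain_boundary_diff frag_map_diff list_boundary_map)

lemma chain_boundary_snoc:
  assumes "Poly_Mapping.keys x \<subseteq> {L. length L = m}"
  shows "chain_boundary (frag_map (\<lambda>L. L @ [v]) x)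
           = frag_map (\<lambda>L. L @ [v]) (chain_boundary x) + frag_cmul ((-1)^m) x"
  using assms
  by (induction x rule: frag_induction)
     (auto simp: chain_boundary_diff frag_map_diff list_boundary_snoc frag_cmul_diff)

lemma chain_prism_Cons:
  "chain_prism p q (frag_map (Cons c) x)
     = frag_map (Cons (p c)) (frag_map (Cons (q c)) (frag_map (map q) x))
       - frag_map (Cons (p c)) (chain_prism p q x)"
  using subset_UNIV
  by (induction x rule: frag_induction) (auto simp: chain_prism_diff frag_map_diff)

lemma list_prism_homotopy:
  "chain_boundary (list_prism p q M) + chain_prism p q (list_boundary M)
     = frag_of (map q M) - frag_of (map p M)"
proof (induction M)
  case Nil
  then show ?case by (simp add: list_boundary_def)
next
  case (Cons c r)
  let ?P = "frag_map (Cons (p c))"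
  have "chain_boundary (list_prism p q (c # r)) + chain_prism p q (list_boundary (c # r))
      = frag_of (q c # map q r) - ?P (frag_of (map q r))
        + ?P (chain_boundary (list_prism p q r) + chain_prism p q (list_boundary r))"
    by (simp add: chain_boundary_diff chain_boundary_Cons list_boundary_Cons chain_prism_diff
        chain_prism_Cons list_boundary_map frag_map_diff frag_map_add algebra_simps)
  then show ?case
    using Cons.IH by (simp add: frag_map_diff)
qed

lemma chain_prism_homotopy:
  "chain_boundary (chain_prism p q x) + chain_prism p q (chain_boundary x)
     = frag_map (map q) x - frag_map (map p) x"
  using subset_UNIV
proof (induction x rule: frag_induction)
  case (diff a b)
  have "chain_boundary (chain_prism p q (a - b)) + chain_prism p q (chain_boundary (a - b))
      = (chain_boundary (chain_prism p q a) + chain_prism p q (chain_boundary a))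
        - (chain_boundary (chain_prism p q b) + chain_prism p q (chain_boundary b))"
    by (simp add: chain_boundary_diff chain_prism_diff)
  with diff show ?case
    by (simp add: frag_map_diff)
qed (auto simp: list_prism_homotopy)

section \<open>Chains of sorted lists in a preorder\<close>

definition sorted_simplices :: "('a \<Rightarrow> 'a \<Rightarrow> bool) \<Rightarrow> 'a set \<Rightarrow> nat \<Rightarrow> 'a list set" where
  "sorted_simplices R A m = {L. length L = Suc m \<and> set L \<subseteq> A \<and> sorted_wrt R L}"

lemma del_nth_sorted_simplices:
  assumes "L \<in> sorted_simplices R A (Suc m)" and "j < length L"
  shows "del_nth j L \<in> sorted_simplices R A m"
proof -
  have L: "take j L @ L ! j # drop (Suc j) L = L"
    using assms(2) by (rule id_take_nth_drop[symmetric])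
  have "sorted_wrt R (take j L @ L ! j # drop (Suc j) L)"
    using assms(1) L by (simp add: sorted_simplices_def)
  then have "sorted_wrt R (del_nth j L)"
    unfolding del_nth_def sorted_wrt_append by simp
  moreover have "set (del_nth j L) \<subseteq> set L"
    using set_take_subset set_drop_subset unfolding del_nth_def by (metis Un_subset_iff set_append)
  ultimately show ?thesis
    using assms by (auto simp: sorted_simplices_def del_nth_def)
qed

lemma keys_chain_boundary_sorted_simplices:
  assumes "Poly_Mapping.keys x \<subseteq> sorted_simplices R A (Suc m)"
  shows "Poly_Mapping.keys (chain_boundary x) \<subseteq> sorted_simplices R A m"
proof -
  have "Poly_Mapping.keys (chain_boundary x)
      \<subseteq> (\<Union>L\<in>Poly_Mapping.keys x. Poly_Mapping.keys (list_boundary L))"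
    unfolding chain_boundary_def by (rule keys_frag_extend)
  also have "\<dots> \<subseteq> (\<Union>L\<in>Poly_Mapping.keys x. \<Union>j<length L. {del_nth j L})"
    by (intro UN_mono order_refl keys_list_boundary)
  also have "\<dots> \<subseteq> sorted_simplices R A m"
    using assms by (auto intro: del_nth_sorted_simplices)
  finally show ?thesis .
qed

lemma map_sorted_simplices:
  assumes "f ` A \<subseteq> A" and "monotone_on A R R f" and "L \<in> sorted_simplices R A m"
  shows "map f L \<in> sorted_simplices R A m"
proof -
  have "sorted_wrt R (map f L)"
    using assms(3) by (intro sorted_wrt_map_mono[of R])
      (auto simp: sorted_simplices_def intro: monotone_onD[OF assms(2)])
  with assms show ?thesis
    by (auto simp: sorted_simplices_def)
qed

lemma keys_frag_map_sorted_simplices: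
  assumes "f ` A \<subseteq> A" and "monotone_on A R R f"
    and "Poly_Mapping.keys x \<subseteq> sorted_simplices R A m"
  shows "Poly_Mapping.keys (frag_map (map f) x) \<subseteq> sorted_simplices R A m"
  using keys_frag_map[of "map f" x] map_sorted_simplices[OF assms(1,2)] assms(3) by blast

lemma keys_list_prism_sorted:
  assumes "transp R" and "p ` A \<subseteq> A" and "q ` A \<subseteq> A"
    and "monotone_on A R R p" and "monotone_on A R R q" and "\<And>a. a \<in> A \<Longrightarrow> R (p a) (q a)"
    and "set M \<subseteq> A" and "sorted_wrt R M"
  shows "Poly_Mapping.keys (list_prism p q M)
           \<subseteq> {L. length L = Suc (length M) \<and> sorted_wrt R L \<and> set L \<subseteq> p ` set M \<union> q ` set M}"
  using assms(7,8)
proof (induction M)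
  case Nil
  then show ?case by simp
next
  case (Cons c r)
  have c: "c \<in> A" and r: "set r \<subseteq> A" "sorted_wrt R r" and cr: "\<And>x. x \<in> set r \<Longrightarrow> R c x"
    using Cons.prems by auto
  have pp: "R (p c) (p x)" and qq: "R (q c) (q x)" and pq: "R (p c) (q x)" if "x \<in> set r" for x
  proof -
    show "R (p c) (p x)" "R (q c) (q x)"
      using that c r cr by (auto intro: monotone_onD[OF assms(4)] monotone_onD[OF assms(5)])
    then show "R (p c) (q x)"
      using assms(1,6) c by (meson transpD)
  qed
  have "Poly_Mapping.keys (list_prism p q (c # r))
      \<subseteq> Poly_Mapping.keys (frag_of (p c # q c # map q r))
          \<union> Poly_Mapping.keys (frag_map (Cons (p c)) (list_prism p q r))"
    by (simp only: list_prism.simps) (rule keys_diff)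
  then have keys: "Poly_Mapping.keys (list_prism p q (c # r))
      \<subseteq> {p c # q c # map q r} \<union> Cons (p c) ` Poly_Mapping.keys (list_prism p q r)"
    using keys_frag_map[of "Cons (p c)" "list_prism p q r"] by (auto simp: keys_frag_of)
  show ?case
  proof
    fix L
    assume "L \<in> Poly_Mapping.keys (list_prism p q (c # r))"
    with keys consider "L = p c # q c # map q r"
      | L' where "L' \<in> Poly_Mapping.keys (list_prism p q r)" "L = p c # L'"
      by blast
    then show "L \<in> {L. length L = Suc (length (c # r)) \<and> sorted_wrt R L
                   \<and> set L \<subseteq> p ` set (c # r) \<union> q ` set (c # r)}"
    proof cases
      case 1
      have "sorted_wrt R (map q r)"
        using r by (intro sorted_wrt_map_mono[of R]) (auto intro: monotone_onD[OF assms(5)])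
      with 1 show ?thesis
        using assms(6)[OF c] pq qq by auto
    next
      case 2
      then show ?thesis
        using Cons.IH[OF r] pp pq by auto
    qed
  qed
qed

lemma keys_chain_prism_sorted_simplices:
  assumes "transp R" and "p ` A \<subseteq> A" and "q ` A \<subseteq> A"
    and "monotone_on A R R p" and "monotone_on A R R q" and "\<And>a. a \<in> A \<Longrightarrow> R (p a) (q a)"
    and "Poly_Mapping.keys x \<subseteq> sorted_simplices R A m"
  shows "Poly_Mapping.keys (chain_prism p q x) \<subseteq> sorted_simplices R A (Suc m)"
proof -
  have "Poly_Mapping.keys (list_prism p q M) \<subseteq> sorted_simplices R A (Suc m)"
    if "M \<in> sorted_simplices R A m" for M
  proof
    fix L
    assume L: "L \<in> Poly_Mapping.keys (list_prism p q M)"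
    have M: "set M \<subseteq> A" "sorted_wrt R M" "length M = Suc m"
      using that by (auto simp: sorted_simplices_def)
    with L have "length L = Suc (Suc m)" "sorted_wrt R L" "set L \<subseteq> p ` set M \<union> q ` set M"
      using keys_list_prism_sorted[OF assms(1-6) M(1,2)] by auto
    moreover have "p ` set M \<union> q ` set M \<subseteq> A"
      using M(1) assms(2,3) by blast
    ultimately show "L \<in> sorted_simplices R A (Suc m)"
      unfolding sorted_simplices_def by (simp add: order_trans)
  qed
  then show ?thesis
    using keys_frag_extend[of "list_prism p q" x] assms(7) unfolding chain_prism_def by blast
qed

lemma keys_cone_sorted_simplices:
  assumes "Poly_Mapping.keys x \<subseteq> sorted_simplices R A m" and "T \<in> A"
    and "\<And>L a. L \<in> Poly_Mapping.keys x \<Longrightarrow> a \<in> set L \<Longrightarrow> R a T"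
  shows "Poly_Mapping.keys (frag_map (\<lambda>L. L @ [T]) x) \<subseteq> sorted_simplices R A (Suc m)"
proof
  fix L
  assume "L \<in> Poly_Mapping.keys (frag_map (\<lambda>L. L @ [T]) x)"
  then obtain L' where "L' \<in> Poly_Mapping.keys x" "L = L' @ [T]"
    using keys_frag_map[of "\<lambda>L. L @ [T]" x] by blast
  with assms show "L \<in> sorted_simplices R A (Suc m)"
    by (auto simp: sorted_simplices_def sorted_wrt_append)
qed

lemma comparable_maps_homologous:
  assumes "transp R" and "p ` A \<subseteq> A" and "q ` A \<subseteq> A"
    and "monotone_on A R R p" and "monotone_on A R R q"
    and "(\<forall>a\<in>A. R (p a) (q a)) \<or> (\<forall>a\<in>A. R (q a) (p a))"
    and "Poly_Mapping.keys X \<subseteq> sorted_simplices R A m" and "chain_boundary X = 0"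
  obtains Y where "Poly_Mapping.keys Y \<subseteq> sorted_simplices R A (Suc m)"
    and "chain_boundary Y = frag_map (map q) X - frag_map (map p) X"
  using assms(6)
proof
  assume "\<forall>a\<in>A. R (p a) (q a)"
  then show thesis
    using that[of "chain_prism p q X"] chain_prism_homotopy[of p q X] assms
      keys_chain_prism_sorted_simplices[of R p A q X m] by simp
next
  assume "\<forall>a\<in>A. R (q a) (p a)"
  moreover have "chain_boundary (- chain_prism q p X) = - chain_boundary (chain_prism q p X)"
    by (simp add: chain_boundary_def frag_extend_minus)
  ultimately show thesis
    using that[of "- chain_prism q p X"] chain_prism_homotopy[of q p X] assms
      keys_chain_prism_sorted_simplices[of R q A p X m] by simp
qed

lemma cycle_below_top_is_boundary:
  assumes "Poly_Mapping.keys Z \<subseteq> sorted_simplices R A m" and "chain_boundary Z = 0"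
    and "T \<in> A" and "\<And>L a. L \<in> Poly_Mapping.keys Z \<Longrightarrow> a \<in> set L \<Longrightarrow> R a T"
  obtains Y where "Poly_Mapping.keys Y \<subseteq> sorted_simplices R A (Suc m)" and "chain_boundary Y = Z"
proof
  let ?cone = "frag_map (\<lambda>L. L @ [T]) Z"
  show "Poly_Mapping.keys (frag_cmul ((-1)^Suc m) ?cone) \<subseteq> sorted_simplices R A (Suc m)"
    using keys_cmul[of _ ?cone] keys_cone_sorted_simplices[OF assms(1,3,4)] by (rule order_trans)
  have "Poly_Mapping.keys Z \<subseteq> {L. length L = Suc m}"
    using assms(1) by (auto simp: sorted_simplices_def)
  then have "chain_boundary ?cone = frag_cmul ((-1)^Suc m) Z"
    using assms(2) by (simp add: chain_boundary_snoc)
  then show "chain_boundary (frag_cmul ((-1)^Suc m) ?cone) = Z"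
    by (simp add: chain_boundary_cmul)
qed

locale zigzag_contraction =
  fixes R :: "'a \<Rightarrow> 'a \<Rightarrow> bool" and A :: "'a set"
    and \<Phi> :: "nat \<Rightarrow> 'a \<Rightarrow> 'a" and N :: nat and T :: 'a
  assumes trans: "transp R"
    and maps_into: "\<Phi> k ` A \<subseteq> A"
    and mono: "monotone_on A R R (\<Phi> k)"
    and comparable: "k < N \<Longrightarrow> (\<forall>a\<in>A. R (\<Phi> k a) (\<Phi> (Suc k) a)) \<or> (\<forall>a\<in>A. R (\<Phi> (Suc k) a) (\<Phi> k a))"
    and end_id: "a \<in> A \<Longrightarrow> \<Phi> N a = a"
    and top: "T \<in> A"
    and start_below_top: "a \<in> A \<Longrightarrow> R (\<Phi> 0 a) T"
begin

lemma zigzag_connected: "a \<in> A \<Longrightarrow> (symclp R)\<^sup>*\<^sup>* a T"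
proof -
  have "\<forall>a\<in>A. (symclp R)\<^sup>*\<^sup>* (\<Phi> k a) T" if "k \<le> N" for k
    using that
  proof (induction k)
    case 0
    then show ?case
      using start_below_top by (blast intro: symclpI1)
  next
    case (Suc k)
    show ?case
    proof
      fix a
      assume "a \<in> A"
      then have "symclp R (\<Phi> (Suc k) a) (\<Phi> k a)"
        using comparable[of k] Suc.prems by (auto simp: symclp_def)
      with Suc \<open>a \<in> A\<close> show "(symclp R)\<^sup>*\<^sup>* (\<Phi> (Suc k) a) T"
        by (auto intro: converse_rtranclp_into_rtranclp)
    qed
  qed
  then show "a \<in> A \<Longrightarrow> ?thesis"
    using end_id by force
qed

lemma cycle_homologous_to_start:
  assumes "Poly_Mapping.keys X \<subseteq> sorted_simplices R A m" and "chain_boundary X = 0" and "k \<le> N"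
  obtains Y where "Poly_Mapping.keys Y \<subseteq> sorted_simplices R A (Suc m)"
    and "chain_boundary Y = frag_map (map (\<Phi> k)) X - frag_map (map (\<Phi> 0)) X"
  using assms(3)
proof (induction k arbitrary: thesis)
  case 0
  show ?case
    by (rule "0.prems"(1)[of 0]) simp_all
next
  case (Suc k)
  obtain Y where Y: "Poly_Mapping.keys Y \<subseteq> sorted_simplices R A (Suc m)"
    "chain_boundary Y = frag_map (map (\<Phi> k)) X - frag_map (map (\<Phi> 0)) X"
    using Suc by (metis Suc_leD)
  obtain W where W: "Poly_Mapping.keys W \<subseteq> sorted_simplices R A (Suc m)"
    "chain_boundary W = frag_map (map (\<Phi> (Suc k))) X - frag_map (map (\<Phi> k)) X"
    using comparable_maps_homologous[OF trans maps_into maps_into mono mono comparable assms(1,2)]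
      Suc.prems(2) by (metis Suc_le_lessD)
  show ?case
  proof (rule Suc.prems(1))
    show "Poly_Mapping.keys (Y + W) \<subseteq> sorted_simplices R A (Suc m)"
      using Y(1) W(1) keys_add[of Y W] by blast
    show "chain_boundary (Y + W) = frag_map (map (\<Phi> (Suc k))) X - frag_map (map (\<Phi> 0)) X"
      using Y(2) W(2) by (simp add: chain_boundary_add)
  qed
qed

theorem cycle_is_boundary:
  assumes "Poly_Mapping.keys X \<subseteq> sorted_simplices R A m" and "chain_boundary X = 0"
  obtains Y where "Poly_Mapping.keys Y \<subseteq> sorted_simplices R A (Suc m)" and "chain_boundary Y = X"
proof -
  let ?Z = "frag_map (map (\<Phi> 0)) X"
  obtain Y where Y: "Poly_Mapping.keys Y \<subseteq> sorted_simplices R A (Suc m)"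
    "chain_boundary Y = X - ?Z"
  proof (rule cycle_homologous_to_start[OF assms order_refl])
    fix Y
    assume "Poly_Mapping.keys Y \<subseteq> sorted_simplices R A (Suc m)"
      "chain_boundary Y = frag_map (map (\<Phi> N)) X - ?Z"
    moreover have "frag_map (map (\<Phi> N)) X = X"
    proof (rule frag_map_id_on_keys)
      fix L
      assume "L \<in> Poly_Mapping.keys X"
      then have "set L \<subseteq> A"
        using assms(1) by (auto simp: sorted_simplices_def)
      then show "map (\<Phi> N) L = L"
        using end_id by (auto intro: map_idI)
    qed
    ultimately show thesis
      using that by simp
  qed
  have Z: "Poly_Mapping.keys ?Z \<subseteq> sorted_simplices R A m" "chain_boundary ?Z = 0"
    using keys_frag_map_sorted_simplices[OF maps_into mono assms(1)] assms(2)
    by (simp_all add: chain_boundary_map)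
  have "R a T" if L: "L \<in> Poly_Mapping.keys ?Z" and a: "a \<in> set L" for L a
  proof -
    obtain L' where "L' \<in> Poly_Mapping.keys X" "L = map (\<Phi> 0) L'"
      using L keys_frag_map[of "map (\<Phi> 0)" X] by blast
    with a assms(1) obtain b where "b \<in> A" "a = \<Phi> 0 b"
      by (auto simp: sorted_simplices_def)
    then show ?thesis
      using start_below_top by simp
  qed
  then obtain W where W: "Poly_Mapping.keys W \<subseteq> sorted_simplices R A (Suc m)"
    "chain_boundary W = ?Z"
    using cycle_below_top_is_boundary[OF Z top] by blast
  show thesis
  proof (rule that)
    show "Poly_Mapping.keys (Y + W) \<subseteq> sorted_simplices R A (Suc m)"
      using Y(1) W(1) keys_add[of Y W] by blast
    show "chain_boundary (Y + W) = X"
      using Y(2) W(2) by (simp add: chain_boundary_add)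
  qed
qed

end

section \<open>Nerves of thin categories\<close>

lemma composable_append:
  "composable C c (xs @ ys) \<longleftrightarrow> composable C c xs \<and> composable C (last (c # map (Cod C) xs)) ys"
  by (induction xs arbitrary: c) auto

definition simplex_vertices :: "('o,'m) cat \<Rightarrow> 'o \<times> 'm list \<Rightarrow> 'o list" where
  "simplex_vertices C s = fst s # map (Cod C) (snd s)"

locale thin_cat =
  fixes C :: "('o,'m) cat"
  assumes cod_in_Obj: "f \<in> Arr C \<Longrightarrow> Cod C f \<in> Obj C"
    and comp_arr: "\<lbrakk>f \<in> Arr C; g \<in> Arr C; Dom C g = Cod C f\<rbrakk>
      \<Longrightarrow> Comp C g f \<in> Arr C \<and> Dom C (Comp C g f) = Dom C f \<and> Cod C (Comp C g f) = Cod C g"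
    and thin: "\<lbrakk>f \<in> Arr C; g \<in> Arr C; Dom C f = Dom C g; Cod C f = Cod C g\<rbrakk> \<Longrightarrow> f = g"
begin

definition has_arr :: "'o \<Rightarrow> 'o \<Rightarrow> bool" where
  "has_arr a b \<longleftrightarrow> (\<exists>f\<in>Arr C. Dom C f = a \<and> Cod C f = b)"

lemma transp_has_arr: "transp has_arr"
  unfolding has_arr_def by (rule transpI) (metis comp_arr)

lemma composable_vertices_sorted:
  assumes "composable C c fs" and "c \<in> Obj C"
  shows "set (c # map (Cod C) fs) \<subseteq> Obj C \<and> sorted_wrt has_arr (c # map (Cod C) fs)"
  using assms
proof (induction fs arbitrary: c)
  case (Cons f fs)
  then have f: "f \<in> Arr C" "Dom C f = c" and fs: "composable C (Cod C f) fs"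
    by auto
  then have "has_arr c (Cod C f)"
    by (auto simp: has_arr_def)
  moreover have "set (Cod C f # map (Cod C) fs) \<subseteq> Obj C"
    "sorted_wrt has_arr (Cod C f # map (Cod C) fs)"
    using Cons.IH[OF fs cod_in_Obj[OF f(1)]] by auto
  ultimately show ?case
    using Cons.prems(2) transp_has_arr by (auto dest: transpD)
qed simp

lemma sorted_vertices_composable:
  assumes "sorted_wrt has_arr (c # L)" and "set L \<subseteq> Obj C"
  obtains fs where "composable C c fs" and "map (Cod C) fs = L"
  using assms
proof (induction L arbitrary: c thesis)
  case Nil
  then show ?case by (metis composable.simps(1) list.map(1))
next
  case (Cons b L)
  obtain f where "f \<in> Arr C" "Dom C f = c" "Cod C f = b"
    using Cons.prems(2) by (auto simp: has_arr_def)
  moreover obtain fs where "composable C b fs" "map (Cod C) fs = L"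
    using Cons.IH[of b] Cons.prems(2,3) by auto
  ultimately show ?case
    using Cons.prems(1)[of "f # fs"] by simp
qed

lemma composable_eq_if_same_vertices:
  assumes "composable C c fs" and "composable C c gs" and "map (Cod C) fs = map (Cod C) gs"
  shows "fs = gs"
  using assms
proof (induction fs arbitrary: c gs)
  case (Cons f fs)
  then obtain g gs' where "gs = g # gs'"
    by (cases gs) auto
  with Cons show ?case
    using thin[of f g] by auto
qed simp

lemma simplex_vertices_in_sorted_simplices:
  assumes "s \<in> nerve C m"
  shows "simplex_vertices C s \<in> sorted_simplices has_arr (Obj C) m"
proof -
  obtain c fs where "s = (c, fs)" "c \<in> Obj C" "length fs = m" "composable C c fs"
    using assms by (auto simp: nerve_def)
  then show ?thesis
    using composable_vertices_sorted[of c fs]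
    by (simp add: simplex_vertices_def sorted_simplices_def)
qed

lemma inj_on_simplex_vertices: "inj_on (simplex_vertices C) (nerve C m)"
  using composable_eq_if_same_vertices
  by (intro inj_onI) (auto simp: nerve_def simplex_vertices_def)

lemma sorted_simplexE:
  assumes "L \<in> sorted_simplices has_arr (Obj C) m"
  obtains s where "s \<in> nerve C m" and "simplex_vertices C s = L"
proof -
  obtain c L' where L: "L = c # L'"
    using assms by (cases L) (auto simp: sorted_simplices_def)
  with assms obtain fs where "composable C c fs" "map (Cod C) fs = L'"
    using sorted_vertices_composable[of c L'] by (auto simp: sorted_simplices_def)
  with L assms show thesis
    using that[of "(c, fs)"] by (auto simp: nerve_def simplex_vertices_def sorted_simplices_def
        dest: arg_cong[of _ _ length])
qed

lemma composable_compose_adjacent: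
  assumes "composable C c (xs @ f # g # ys)"
  shows "composable C c (xs @ Comp C g f # ys)"
  using assms comp_arr[of f g] by (simp add: composable_append)

lemma nerve_face:
  assumes "s \<in> nerve C (Suc m)" and "i \<le> Suc m"
  shows "face C i s \<in> nerve C m
    \<and> simplex_vertices C (face C i s) = del_nth i (simplex_vertices C s)"
proof -
  obtain c fs where s: "s = (c, fs)" and c: "c \<in> Obj C"
    and len: "length fs = Suc m" and fs: "composable C c fs"
    using assms(1) by (auto simp: nerve_def)
  consider "i = 0" | "i = Suc m" | j where "i = Suc j" "j < m"
    using assms(2) by (metis le_neq_implies_less not0_implies_Suc Suc_less_SucD)
  then show ?thesis
  proof cases
    case 1
    obtain f fs' where "fs = f # fs'"
      using len by (cases fs) auto
    with 1 s c len fs show ?thesis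
      using cod_in_Obj by (simp add: face_def nerve_def simplex_vertices_def)
  next
    case 2
    obtain f fs' where fs': "fs = fs' @ [f]"
      using len by (cases fs rule: rev_exhaust) auto
    with len have "length (map (Cod C) fs') = m"
      by simp
    then have "del_nth (Suc m) (c # map (Cod C) fs' @ [Cod C f]) = c # map (Cod C) fs'"
      by (simp add: del_nth_def)
    with 2 s c len fs fs' show ?thesis
      by (simp add: face_def nerve_def simplex_vertices_def composable_append)
  next
    case 3
    obtain xs f g ys where split: "fs = xs @ f # g # ys" and xs: "length xs = j"
      using 3 len id_take_nth_drop[of j fs] Cons_nth_drop_Suc[of "Suc j" fs]
      by (metis Suc_lessD Suc_mono length_take min_absorb2 less_imp_le_nat)
    have "face C i s = (c, xs @ Comp C g f # ys)"
      using 3 s split xs by (simp add: face_def nth_append)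
    moreover have "composable C c (xs @ Comp C g f # ys)"
      using fs split composable_compose_adjacent by simp
    moreover have "Cod C (Comp C g f) = Cod C g"
      using fs split comp_arr[of f g] by (simp add: composable_append)
    ultimately show ?thesis
      using 3 s c len split xs by (simp add: nerve_def simplex_vertices_def del_nth_def)
  qed
qed

definition nerve_chain :: "nat \<Rightarrow> ('o list \<Rightarrow>\<^sub>0 int) \<Rightarrow> 'o \<times> 'm list \<Rightarrow> int" where
  "nerve_chain m Z s = (if s \<in> nerve C m then poly_mapping.lookup Z (simplex_vertices C s) else 0)"

lemma support_nerve_chain:
  "{s. nerve_chain m Z s \<noteq> 0} = simplex_vertices C -` Poly_Mapping.keys Z \<inter> nerve C m"
  by (auto simp: nerve_chain_def in_keys_iff)

lemma nerve_chain_in_chains: "nerve_chain m Z \<in> chains C m"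
  using finite_vimage_IntI[OF finite_keys inj_on_simplex_vertices, of Z m]
  by (simp add: chains_def support_nerve_chain)

lemma bij_betw_support_nerve_chain:
  assumes "Poly_Mapping.keys Z \<subseteq> sorted_simplices has_arr (Obj C) m"
  shows "bij_betw (simplex_vertices C) {s. nerve_chain m Z s \<noteq> 0} (Poly_Mapping.keys Z)"
  unfolding support_nerve_chain bij_betw_def
proof
  show "inj_on (simplex_vertices C) (simplex_vertices C -` Poly_Mapping.keys Z \<inter> nerve C m)"
    using inj_on_simplex_vertices by (rule inj_on_subset) blast
  show "simplex_vertices C ` (simplex_vertices C -` Poly_Mapping.keys Z \<inter> nerve C m) = Poly_Mapping.keys Z"
  proof (intro equalityI subsetI)
    fix L
    assume "L \<in> Poly_Mapping.keys Z"
    with assms obtain s where "s \<in> nerve C m" "simplex_vertices C s = L"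
      using sorted_simplexE by blast
    with \<open>L \<in> Poly_Mapping.keys Z\<close> show "L \<in> simplex_vertices C ` (simplex_vertices C -` Poly_Mapping.keys Z \<inter> nerve C m)"
      by blast
  qed auto
qed

lemma chains_nerve_chainE:
  assumes "x \<in> chains C m"
  obtains Z where "Poly_Mapping.keys Z \<subseteq> sorted_simplices has_arr (Obj C) m"
    and "nerve_chain m Z = x"
proof
  let ?S = "{s. x s \<noteq> 0}"
  define Z where "Z = (\<Sum>s\<in>?S. frag_cmul (x s) (frag_of (simplex_vertices C s)))"
  have S: "finite ?S" "?S \<subseteq> nerve C m"
    using assms by (auto simp: chains_def)
  have "Poly_Mapping.keys Z
      \<subseteq> (\<Union>s\<in>?S. Poly_Mapping.keys (frag_cmul (x s) (frag_of (simplex_vertices C s))))"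
    unfolding Z_def by (rule keys_sum)
  also have "\<dots> \<subseteq> simplex_vertices C ` nerve C m"
    using S(2) keys_cmul by (fastforce simp: keys_frag_of)
  finally show "Poly_Mapping.keys Z \<subseteq> sorted_simplices has_arr (Obj C) m"
    using simplex_vertices_in_sorted_simplices by blast
  show "nerve_chain m Z = x"
  proof
    fix t
    show "nerve_chain m Z t = x t"
    proof (cases "t \<in> nerve C m")
      case True
      have "nerve_chain m Z t = (\<Sum>s\<in>?S. if s = t then x s else 0)"
        using True S(2) inj_on_simplex_vertices[of m]
        by (auto simp: nerve_chain_def Z_def lookup_sum inj_on_eq_iff intro!: sum.cong)
      then show ?thesis
        using S(1) by simp
    next
      case False
      then show ?thesis
        using S(2) by (auto simp: nerve_chain_def)
    qed
  qed
qed

lemma nerve_chain_eq_0D: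
  assumes "Poly_Mapping.keys Z \<subseteq> sorted_simplices has_arr (Obj C) m" and "nerve_chain m Z = (\<lambda>_. 0)"
  shows "Z = 0"
  using bij_betw_support_nerve_chain[OF assms(1)] assms(2)
  by (simp add: bij_betw_def flip: keys_eq_empty)

lemma boundary_nerve_chain:
  assumes Z: "Poly_Mapping.keys Z \<subseteq> sorted_simplices has_arr (Obj C) (Suc m)"
  shows "boundary C (Suc m) (nerve_chain (Suc m) Z) = nerve_chain m (chain_boundary Z)"
proof
  fix t
  let ?S = "{s. nerve_chain (Suc m) Z s \<noteq> 0}"
  have S: "?S \<subseteq> nerve C (Suc m)"
    by (auto simp: nerve_chain_def split: if_splits)
  show "boundary C (Suc m) (nerve_chain (Suc m) Z) t = nerve_chain m (chain_boundary Z) t"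
  proof (cases "t \<in> nerve C m")
    case True
    let ?G = "\<lambda>L. \<Sum>i<length L.
        if simplex_vertices C t = del_nth i L then (-1)^i * poly_mapping.lookup Z L else 0"
    have face_eq: "face C i s = t \<longleftrightarrow> simplex_vertices C t = del_nth i (simplex_vertices C s)"
      if "s \<in> nerve C (Suc m)" "i \<le> Suc m" for s i
      using nerve_face[OF that] True inj_on_simplex_vertices[of m] by (metis inj_on_eq_iff)
    have "boundary C (Suc m) (nerve_chain (Suc m) Z) t = (\<Sum>s\<in>?S. ?G (simplex_vertices C s))"
      unfolding boundary_def
    proof (rule sum.cong[OF refl])
      fix s
      assume "s \<in> ?S"
      with S have s: "s \<in> nerve C (Suc m)"
        by blast
      then have "{..<length (simplex_vertices C s)} = {0..Suc m}"
        using simplex_vertices_in_sorted_simplices[OF s] by (auto simp: sorted_simplices_def)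
      then show "(\<Sum>i\<in>{0..Suc m}. if face C i s = t then (-1)^i * nerve_chain (Suc m) Z s else 0)
          = ?G (simplex_vertices C s)"
        using s face_eq by (auto simp: nerve_chain_def intro!: sum.cong)
    qed
    also have "\<dots> = (\<Sum>L\<in>Poly_Mapping.keys Z. ?G L)"
      by (rule sum.reindex_bij_betw[OF bij_betw_support_nerve_chain[OF Z]])
    also have "\<dots> = nerve_chain m (chain_boundary Z) t"
      using True by (simp add: nerve_chain_def lookup_chain_boundary)
    finally show ?thesis .
  next
    case False
    then have "face C i s \<noteq> t" if "s \<in> nerve C (Suc m)" "i \<le> Suc m" for s i
      using nerve_face[OF that] by auto
    then show ?thesis
      using False S unfolding boundary_def nerve_chain_def
      by (simp add: subset_iff)
  qed
qed

lemma connected_if_zigzag_contraction: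
  assumes "zigzag_contraction has_arr (Obj C) \<Phi> N T"
  shows "connected_cat C"
proof -
  interpret zigzag_contraction has_arr "Obj C" \<Phi> N T
    by (rule assms)
  have "(\<lambda>a b. \<exists>f\<in>Arr C. Dom C f = a \<and> Cod C f = b \<or> Dom C f = b \<and> Cod C f = a) = symclp has_arr"
    by (auto simp: fun_eq_iff symclp_def has_arr_def)
  moreover have "(symclp has_arr)\<^sup>*\<^sup>* a b" if "a \<in> Obj C" "b \<in> Obj C" for a b
    using zigzag_connected[OF that(1)] zigzag_connected[OF that(2)]
      equivp_rtranclp_symclp[of has_arr]
    by (meson equivp_symp equivp_transp)
  ultimately show ?thesis
    using top by (auto simp: connected_cat_def)
qed

lemma colim_Z_vanishes_if_zigzag_contraction:
  assumes "zigzag_contraction has_arr (Obj C) \<Phi> N T" and "q > 0"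
  shows "colim_Z_vanishes C q"
  unfolding colim_Z_vanishes_def
proof (intro ballI impI)
  interpret zigzag_contraction has_arr "Obj C" \<Phi> N T
    by (rule assms)
  obtain m where q: "q = Suc m"
    using assms(2) gr0_implies_Suc by blast
  fix x
  assume x: "x \<in> chains C q" and cycle: "boundary C q x = (\<lambda>_. 0)"
  obtain Z where Z: "Poly_Mapping.keys Z \<subseteq> sorted_simplices has_arr (Obj C) q" "nerve_chain q Z = x"
    using chains_nerve_chainE[OF x] .
  have "chain_boundary Z = 0"
    using boundary_nerve_chain[of Z m] Z cycle q
    by (intro nerve_chain_eq_0D[of _ m] keys_chain_boundary_sorted_simplices) simp_all
  then obtain Y where "Poly_Mapping.keys Y \<subseteq> sorted_simplices has_arr (Obj C) (Suc q)"
    "chain_boundary Y = Z"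
    using cycle_is_boundary[OF Z(1)] by blast
  then show "\<exists>y\<in>chains C (Suc q). boundary C (Suc q) y = x"
    using nerve_chain_in_chains boundary_nerve_chain Z(2) by blast
qed

end

section \<open>Comma categories over a cancellative monoid\<close>

abbreviation inclusion_comma :: "('a, 'b) monoid_scheme \<Rightarrow> 'a set \<Rightarrow> 'a \<Rightarrow> _" where
  "inclusion_comma M S d \<equiv> comma (full_subcat (FCat M) S) (FCat M) id id d"

lemma comma_simps [simp]:
  "Dom (comma C D So Sa d) (F, x, y) = x"
  "Cod (comma C D So Sa d) (F, x, y) = y"
  "Comp (comma C D So Sa d) (H, y, z) (F, x, y') = (Comp C H F, x, z)"
  by (simp_all add: comma_def Let_def)

lemma Comp_full_subcat [simp]: "Comp (full_subcat C S) = Comp C"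
  by (simp add: full_subcat_def)

lemma Comp_FCat [simp]: "Comp (FCat M) (b, f2, g2) (a, f1, g1) = (a, f1 \<otimes>\<^bsub>M\<^esub> f2, g2 \<otimes>\<^bsub>M\<^esub> g1)"
  by (simp add: FCat_def)

lemma arr_tuple_cases:
  obtains a h k c1 c1' f1 g1 c2 c2' f2 g2
  where "F = ((a, h, k), (c1, c1', f1, g1), (c2, c2', f2, g2))"
proof -
  obtain A x y where "F = (A, x, y)"
    by (rule prod_cases3)
  moreover obtain a h k where "A = (a, h, k)"
    by (rule prod_cases3)
  moreover obtain c1 c1' f1 g1 where "x = (c1, c1', f1, g1)"
    by (rule prod_cases4)
  moreover obtain c2 c2' f2 g2 where "y = (c2, c2', f2, g2)"
    by (rule prod_cases4)
  ultimately show thesis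
    using that by blast
qed

context monoid_cancel
begin

context
  fixes S
  assumes S: "S \<subseteq> carrier G"
begin

lemma Obj_inclusion_comma:
  "(c, c', f, g) \<in> Obj (inclusion_comma G S d) \<longleftrightarrow>
    c \<in> S \<and> c' = c \<and> f \<in> carrier G \<and> g \<in> carrier G \<and> g \<otimes> c \<otimes> f = d"
  using S by (auto simp: comma_def full_subcat_def FCat_def)

lemma Arr_inclusion_comma:
  "((a, h, k), (c1, c1', f1, g1), (c2, c2', f2, g2)) \<in> Arr (inclusion_comma G S d) \<longleftrightarrow>
    (c1, c1', f1, g1) \<in> Obj (inclusion_comma G S d) \<and> (c2, c2', f2, g2) \<in> Obj (inclusion_comma G S d) \<and>
    h \<in> carrier G \<and> k \<in> carrier G \<and> a = c1 \<and> k \<otimes> c1 \<otimes> h = c2 \<and> h \<otimes> f2 = f1 \<and> g2 \<otimes> k = g1"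
  using S by (auto simp: comma_def full_subcat_def FCat_def Let_def)

lemma comp_Arr_inclusion_comma:
  assumes F: "((a, h, k), (c1, c1', f1, g1), (c2, c2', f2, g2)) \<in> Arr (inclusion_comma G S d)"
    and H: "((a', h', k'), (c2, c2', f2, g2), (c3, c3', f3, g3)) \<in> Arr (inclusion_comma G S d)"
  shows "((a, h \<otimes> h', k' \<otimes> k), (c1, c1', f1, g1), (c3, c3', f3, g3)) \<in> Arr (inclusion_comma G S d)"
proof -
  have F': "(c1, c1', f1, g1) \<in> Obj (inclusion_comma G S d)" "h \<in> carrier G" "k \<in> carrier G"
      "a = c1" "k \<otimes> c1 \<otimes> h = c2" "h \<otimes> f2 = f1" "g2 \<otimes> k = g1"
    using F unfolding Arr_inclusion_comma by auto
  have H': "(c3, c3', f3, g3) \<in> Obj (inclusion_comma G S d)" "h' \<in> carrier G" "k' \<in> carrier G"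
      "k' \<otimes> c2 \<otimes> h' = c3" "h' \<otimes> f3 = f2" "g3 \<otimes> k' = g2"
    using H unfolding Arr_inclusion_comma by auto
  have carr: "c1 \<in> carrier G" "f3 \<in> carrier G" "g3 \<in> carrier G"
    using F'(1) H'(1) S by (auto simp: Obj_inclusion_comma)
  have "k' \<otimes> k \<otimes> c1 \<otimes> (h \<otimes> h') = c3"
    unfolding F'(5)[symmetric] H'(4)[symmetric] using F'(2,3) H'(2,3) carr by (simp add: m_assoc)
  moreover have "h \<otimes> h' \<otimes> f3 = f1"
    unfolding F'(6)[symmetric] H'(5)[symmetric] using F'(2) H'(2) carr by (simp add: m_assoc)
  moreover have "g3 \<otimes> (k' \<otimes> k) = g1"
    unfolding F'(7)[symmetric] H'(6)[symmetric] using F'(3) H'(3) carr by (simp add: m_assoc)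
  ultimately show ?thesis
    unfolding Arr_inclusion_comma using F' H' by simp
qed

lemma Arr_inclusion_comma_unique:
  assumes "((a, h, k), x, (c2, c2', f2, g2)) \<in> Arr (inclusion_comma G S d)"
    and "((a', h', k'), x, (c2, c2', f2, g2)) \<in> Arr (inclusion_comma G S d)"
  shows "(a, h, k) = (a', h', k')"
proof (cases x rule: prod_cases4)
  case (fields c1 c1' f1 g1)
  have "f2 \<in> carrier G" "g2 \<in> carrier G" "h \<in> carrier G" "k \<in> carrier G" "a = c1"
      "h \<otimes> f2 = f1" "g2 \<otimes> k = g1"
    using assms(1) unfolding fields Arr_inclusion_comma Obj_inclusion_comma by auto
  moreover have "h' \<in> carrier G" "k' \<in> carrier G" "a' = c1" "h' \<otimes> f2 = f1" "g2 \<otimes> k' = g1"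
    using assms(2) unfolding fields Arr_inclusion_comma by auto
  ultimately show ?thesis
    using l_cancel[of g2 k k'] r_cancel[of h f2 h'] by simp
qed

lemma thin_cat_inclusion_comma: "thin_cat (inclusion_comma G S d)"
proof
  let ?K = "inclusion_comma G S d"
  show "Cod ?K F \<in> Obj ?K" if "F \<in> Arr ?K" for F
    using that by (auto simp: comma_def Let_def)
  fix F H
  assume F: "F \<in> Arr ?K" and H: "H \<in> Arr ?K"
  obtain a h k c1 c1' f1 g1 c2 c2' f2 g2
    where F_eq: "F = ((a, h, k), (c1, c1', f1, g1), (c2, c2', f2, g2))"
    by (rule arr_tuple_cases)
  show "Comp ?K H F \<in> Arr ?K \<and> Dom ?K (Comp ?K H F) = Dom ?K F \<and> Cod ?K (Comp ?K H F) = Cod ?K H"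
    if HF: "Dom ?K H = Cod ?K F"
  proof -
    obtain a' h' k' c3 c3' f3 g3
      where H_eq: "H = ((a', h', k'), (c2, c2', f2, g2), (c3, c3', f3, g3))"
      using HF F_eq by (cases H rule: arr_tuple_cases) simp
    show ?thesis
      using comp_Arr_inclusion_comma F H unfolding F_eq H_eq by simp
  qed
  show "F = H" if FH: "Dom ?K F = Dom ?K H" "Cod ?K F = Cod ?K H"
  proof -
    obtain a' h' k' where H_eq: "H = ((a', h', k'), (c1, c1', f1, g1), (c2, c2', f2, g2))"
      using FH F_eq by (cases H rule: arr_tuple_cases) simp
    show ?thesis
      using Arr_inclusion_comma_unique F H unfolding F_eq H_eq by blast
  qed
qed

lemma has_arr_inclusion_comma:
  assumes x: "(c1, c1', f1, g1) \<in> Obj (inclusion_comma G S d)"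
    and y: "(c2, c2', f2, g2) \<in> Obj (inclusion_comma G S d)"
  shows "thin_cat.has_arr (inclusion_comma G S d) (c1, c1', f1, g1) (c2, c2', f2, g2) \<longleftrightarrow>
    (\<exists>h\<in>carrier G. \<exists>k\<in>carrier G. k \<otimes> c1 \<otimes> h = c2 \<and> h \<otimes> f2 = f1 \<and> g2 \<otimes> k = g1)"
  unfolding thin_cat.has_arr_def[OF thin_cat_inclusion_comma]
proof
  assume "\<exists>F\<in>Arr (inclusion_comma G S d). Dom (inclusion_comma G S d) F = (c1, c1', f1, g1)
    \<and> Cod (inclusion_comma G S d) F = (c2, c2', f2, g2)"
  then obtain F where F: "F \<in> Arr (inclusion_comma G S d)"
    "Dom (inclusion_comma G S d) F = (c1, c1', f1, g1)"
    "Cod (inclusion_comma G S d) F = (c2, c2', f2, g2)"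
    by blast
  obtain a h k where "F = ((a, h, k), (c1, c1', f1, g1), (c2, c2', f2, g2))"
    using F(2,3) by (cases F rule: arr_tuple_cases) simp
  with F(1) have "((a, h, k), (c1, c1', f1, g1), (c2, c2', f2, g2)) \<in> Arr (inclusion_comma G S d)"
    by simp
  then show "\<exists>h\<in>carrier G. \<exists>k\<in>carrier G. k \<otimes> c1 \<otimes> h = c2 \<and> h \<otimes> f2 = f1 \<and> g2 \<otimes> k = g1"
    unfolding Arr_inclusion_comma by blast
next
  assume "\<exists>h\<in>carrier G. \<exists>k\<in>carrier G. k \<otimes> c1 \<otimes> h = c2 \<and> h \<otimes> f2 = f1 \<and> g2 \<otimes> k = g1"
  then obtain h k
    where "((c1, h, k), (c1, c1', f1, g1), (c2, c2', f2, g2)) \<in> Arr (inclusion_comma G S d)"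
    unfolding Arr_inclusion_comma using x y by blast
  then show "\<exists>F\<in>Arr (inclusion_comma G S d). Dom (inclusion_comma G S d) F = (c1, c1', f1, g1)
    \<and> Cod (inclusion_comma G S d) F = (c2, c2', f2, g2)"
    by force
qed

end

end

section \<open>The comma categories of the inclusion of \<open>T\<^sup>n\<close> into \<open>\<nat>\<^sup>n\<close>\<close>

type_synonym comma_obj = "(nat \<Rightarrow> nat) \<times> (nat \<Rightarrow> nat) \<times> (nat \<Rightarrow> nat) \<times> (nat \<Rightarrow> nat)"

abbreviation T_comma :: "nat \<Rightarrow> (nat \<Rightarrow> nat) \<Rightarrow> (comma_obj, _) cat" where
  "T_comma n d \<equiv> inclusion_comma (Nmon n) (Tset n) d"

lemma monoid_cancel_Nmon: "monoid_cancel (Nmon n)"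
proof -
  have "monoid (Nmon n)"
    by unfold_locales (auto simp: Nmon_def)
  then show ?thesis
    by (rule monoid.monoid_cancelI) (auto simp: Nmon_def fun_eq_iff)
qed

lemma Tset_iff: "c \<in> Tset n \<longleftrightarrow> (\<forall>j. c j \<le> 1) \<and> (\<forall>j\<ge>n. c j = 0)"
proof
  assume H: "(\<forall>j. c j \<le> 1) \<and> (\<forall>j\<ge>n. c j = 0)"
  have "c = (\<lambda>j. if j \<in> {j. c j = 1} then 1 else 0)"
  proof
    fix j
    show "c j = (if j \<in> {j. c j = 1} then 1 else 0)"
      using H[THEN conjunct1, rule_format, of j] by auto
  qed
  moreover have "{j. c j = 1} \<subseteq> {..<n}"
    using H by (auto simp: not_less[symmetric])
  ultimately show "c \<in> Tset n"
    unfolding Tset_def by blast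
qed (auto simp: Tset_def)

lemma Tset_subset_carrier: "Tset n \<subseteq> carrier (Nmon n)"
  by (auto simp: Tset_iff Nmon_def)

lemma Obj_inclusion_comma_Nmon:
  "(c, c', f, g) \<in> Obj (T_comma n d) \<longleftrightarrow>
     c \<in> Tset n \<and> c' = c \<and> f \<in> carrier (Nmon n) \<and> g \<in> carrier (Nmon n)
     \<and> (\<forall>j. g j + c j + f j = d j)"
  by (simp add: monoid_cancel.Obj_inclusion_comma[OF monoid_cancel_Nmon Tset_subset_carrier])
     (auto simp: Nmon_def fun_eq_iff)

lemma has_arr_inclusion_comma_Nmon:
  assumes x: "(c1, c1', f1, g1) \<in> Obj (T_comma n d)"
    and y: "(c2, c2', f2, g2) \<in> Obj (T_comma n d)"
  shows "thin_cat.has_arr (T_comma n d) (c1, c1', f1, g1) (c2, c2', f2, g2)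
    \<longleftrightarrow> (\<forall>j. f2 j \<le> f1 j \<and> g2 j \<le> g1 j)"
  unfolding monoid_cancel.has_arr_inclusion_comma[OF monoid_cancel_Nmon Tset_subset_carrier x y]
proof
  assume "\<exists>h\<in>carrier (Nmon n). \<exists>k\<in>carrier (Nmon n).
    k \<otimes>\<^bsub>Nmon n\<^esub> c1 \<otimes>\<^bsub>Nmon n\<^esub> h = c2 \<and> h \<otimes>\<^bsub>Nmon n\<^esub> f2 = f1 \<and> g2 \<otimes>\<^bsub>Nmon n\<^esub> k = g1"
  then obtain h k where "f1 = (\<lambda>j. h j + f2 j)" "g1 = (\<lambda>j. g2 j + k j)"
    by (auto simp: Nmon_def)
  then show "\<forall>j. f2 j \<le> f1 j \<and> g2 j \<le> g1 j"
    by simp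
next
  assume le: "\<forall>j. f2 j \<le> f1 j \<and> g2 j \<le> g1 j"
  have "(\<lambda>j. g1 j - g2 j + c1 j + (f1 j - f2 j)) = c2"
  proof
    fix j
    have "g1 j + c1 j + f1 j = g2 j + c2 j + f2 j"
      using x y by (simp add: Obj_inclusion_comma_Nmon)
    with le[rule_format, of j] show "g1 j - g2 j + c1 j + (f1 j - f2 j) = c2 j"
      by arith
  qed
  moreover have "f1 \<in> carrier (Nmon n)" "g1 \<in> carrier (Nmon n)"
    using x by (simp_all add: Obj_inclusion_comma_Nmon)
  then have "(\<lambda>j. f1 j - f2 j) \<in> carrier (Nmon n)" "(\<lambda>j. g1 j - g2 j) \<in> carrier (Nmon n)"
    by (auto simp: Nmon_def)
  moreover have "(\<lambda>j. (f1 j - f2 j) + f2 j) = f1" "(\<lambda>j. g2 j + (g1 j - g2 j)) = g1"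
    using le by (simp_all add: fun_eq_iff)
  ultimately show "\<exists>h\<in>carrier (Nmon n). \<exists>k\<in>carrier (Nmon n).
    k \<otimes>\<^bsub>Nmon n\<^esub> c1 \<otimes>\<^bsub>Nmon n\<^esub> h = c2 \<and> h \<otimes>\<^bsub>Nmon n\<^esub> f2 = f1 \<and> g2 \<otimes>\<^bsub>Nmon n\<^esub> k = g1"
    unfolding Nmon_def by (intro bexI) auto
qed

(* The fence 0 < 1 > 2 < 3 > ... : odd numbers are local maxima. *)
definition fence_le :: "nat \<Rightarrow> nat \<Rightarrow> bool" where
  "fence_le x y \<longleftrightarrow> y div 2 \<le> x div 2 \<and> (x + 1) div 2 \<le> (y + 1) div 2"

lemma fence_le_refl: "fence_le x x"
  by (simp add: fence_le_def)

lemma fence_le_min: "fence_le x y \<Longrightarrow> fence_le (min x K) (min y K)"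
  unfolding fence_le_def min_def by (auto intro: div_le_mono order_trans)

lemma fence_le_min_Suc:
  "even K \<Longrightarrow> fence_le (min x K) (min x (Suc K))"
  "odd K \<Longrightarrow> fence_le (min x (Suc K)) (min x K)"
  unfolding fence_le_def min_def by (auto elim!: evenE oddE)


(* An object (c, (c, f, g)) of S/d, where g + c + f = d and c j <= 1, is determined by its heights
   2 f j + c j; at_height d inverts height. *)
definition height :: "comma_obj \<Rightarrow> nat \<Rightarrow> nat" where
  "height x j = (case x of (c, _, f, _) \<Rightarrow> 2 * f j + c j)"

definition at_height :: "(nat \<Rightarrow> nat) \<Rightarrow> (nat \<Rightarrow> nat) \<Rightarrow> comma_obj" where
  "at_height d h = (\<lambda>j. h j mod 2, \<lambda>j. h j mod 2, \<lambda>j. h j div 2, \<lambda>j. d j - (h j + 1) div 2)"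

definition truncate_height :: "(nat \<Rightarrow> nat) \<Rightarrow> nat \<Rightarrow> comma_obj \<Rightarrow> comma_obj" where
  "truncate_height d K x = at_height d (\<lambda>j. min (height x j) K)"

lemma height_at_height [simp]: "height (at_height d h) = h"
  by (simp add: height_def at_height_def fun_eq_iff)

lemma mod_2_add_div_2: "h mod 2 + h div 2 = (h + 1) div 2" for h :: nat
  by presburger

lemma nat_eq_0_iff_mod_2_div_2: "h = 0 \<longleftrightarrow> h mod 2 = 0 \<and> h div 2 = 0" for h :: nat
  by presburger

lemma thin_cat_inclusion_comma_Nmon: "thin_cat (T_comma n d)"
  by (rule monoid_cancel.thin_cat_inclusion_comma[OF monoid_cancel_Nmon Tset_subset_carrier])

context
  fixes n :: nat and d :: "nat \<Rightarrow> nat"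
  assumes d: "d \<in> carrier (Nmon n)"
begin

lemma at_height_height:
  assumes "x \<in> Obj (T_comma n d)"
  shows "at_height d (height x) = x"
proof -
  obtain c f g where "x = (c, c, f, g)" "\<forall>j. c j \<le> 1" "\<forall>j. d j = g j + c j + f j"
    using assms by (cases x rule: prod_cases4) (auto simp: Obj_inclusion_comma_Nmon Tset_iff)
  moreover have "c j mod 2 = c j" "c j div 2 = 0" "(2 * f j + c j + 1) div 2 = f j + c j" for j
    using calculation(2)[rule_format, of j] by (auto simp: le_Suc_eq)
  ultimately show ?thesis
    by (simp add: at_height_def height_def fun_eq_iff)
qed

lemma at_height_in_Obj_iff:
  "at_height d h \<in> Obj (T_comma n d) \<longleftrightarrow>
     (\<forall>j\<ge>n. h j = 0) \<and> (\<forall>j. (h j + 1) div 2 \<le> d j)"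
proof -
  have "(\<lambda>j. d j - (h j + 1) div 2) \<in> carrier (Nmon n)"
    using d by (simp add: Nmon_def)
  moreover have "d j - (h j + 1) div 2 + h j mod 2 + h j div 2 = d j \<longleftrightarrow> (h j + 1) div 2 \<le> d j" for j
    using mod_2_add_div_2[of "h j"] by linarith
  moreover have "h j mod 2 \<le> 1" for j
    by simp
  ultimately show ?thesis
    unfolding at_height_def Obj_inclusion_comma_Nmon Tset_iff
    by (auto simp: Nmon_def nat_eq_0_iff_mod_2_div_2[of "h _"])
qed

lemma has_arr_at_height:
  assumes "at_height d h1 \<in> Obj (T_comma n d)"
    and "at_height d h2 \<in> Obj (T_comma n d)"
  shows "thin_cat.has_arr (T_comma n d) (at_height d h1) (at_height d h2)
    \<longleftrightarrow> (\<forall>j. fence_le (h1 j) (h2 j))"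
proof -
  have "d j - (h2 j + 1) div 2 \<le> d j - (h1 j + 1) div 2 \<longleftrightarrow> (h1 j + 1) div 2 \<le> (h2 j + 1) div 2"
    for j
    using assms[unfolded at_height_in_Obj_iff] by (meson diff_le_mono2 le_diff_iff')
  then show ?thesis
    using has_arr_inclusion_comma_Nmon[OF assms[unfolded at_height_def]]
    by (simp add: at_height_def fence_le_def)
qed

lemma height_bounds:
  assumes "x \<in> Obj (T_comma n d)"
  shows "\<forall>j\<ge>n. height x j = 0" and "\<forall>j. (height x j + 1) div 2 \<le> d j"
  using at_height_in_Obj_iff[of "height x"] assms by (simp_all add: at_height_height)

lemma truncate_height_in_Obj:
  assumes "x \<in> Obj (T_comma n d)"
  shows "truncate_height d K x \<in> Obj (T_comma n d)"
proof -
  note height_bounds[OF assms]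
  moreover have "(min (height x j) K + 1) div 2 \<le> (height x j + 1) div 2" for j
    by (simp add: div_le_mono)
  ultimately show ?thesis
    unfolding truncate_height_def at_height_in_Obj_iff by (auto intro: order_trans)
qed

lemma has_arr_truncate_height_iff:
  assumes "x \<in> Obj (T_comma n d)" "y \<in> Obj (T_comma n d)"
  shows "thin_cat.has_arr (T_comma n d) (truncate_height d K x) (truncate_height d L y)
    \<longleftrightarrow> (\<forall>j. fence_le (min (height x j) K) (min (height y j) L))"
  using has_arr_at_height truncate_height_in_Obj[OF assms(1)] truncate_height_in_Obj[OF assms(2)]
  unfolding truncate_height_def by blast

lemma zigzag_contraction_truncate_height:
  "zigzag_contraction (thin_cat.has_arr (T_comma n d))
     (Obj (T_comma n d)) (truncate_height d) (2 * (\<Sum>j<n. d j)) (at_height d (\<lambda>_. 0))"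
proof
  let ?K = "T_comma n d"
  have height_le: "height x j \<le> 2 * (\<Sum>j<n. d j)" if "x \<in> Obj ?K" for x j
  proof (cases "j < n")
    case True
    have "(height x j + 1) div 2 \<le> d j" "d j \<le> (\<Sum>j<n. d j)"
      using height_bounds(2)[OF that] True by (auto intro: member_le_sum)
    then show ?thesis
      by linarith
  next
    case False
    then show ?thesis
      using height_bounds(1)[OF that] by simp
  qed
  show "transp (thin_cat.has_arr ?K)"
    by (rule thin_cat.transp_has_arr[OF thin_cat_inclusion_comma_Nmon])
  show "truncate_height d k ` Obj ?K \<subseteq> Obj ?K" for k
    using truncate_height_in_Obj by blast
  show "monotone_on (Obj ?K) (thin_cat.has_arr ?K) (thin_cat.has_arr ?K) (truncate_height d k)"
    for k
  proof (rule monotone_onI)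
    fix x y
    assume x: "x \<in> Obj ?K" and y: "y \<in> Obj ?K" and "thin_cat.has_arr ?K x y"
    then have "\<forall>j. fence_le (height x j) (height y j)"
      using has_arr_at_height[of "height x" "height y"] by (simp add: at_height_height)
    then show "thin_cat.has_arr ?K (truncate_height d k x) (truncate_height d k y)"
      using has_arr_truncate_height_iff[OF x y] fence_le_min by blast
  qed
  show "(\<forall>a\<in>Obj ?K. thin_cat.has_arr ?K (truncate_height d k a) (truncate_height d (Suc k) a)) \<or>
      (\<forall>a\<in>Obj ?K. thin_cat.has_arr ?K (truncate_height d (Suc k) a) (truncate_height d k a))" for k
    using has_arr_truncate_height_iff fence_le_min_Suc by (cases "even k") auto
  show "truncate_height d (2 * (\<Sum>j<n. d j)) a = a" if "a \<in> Obj ?K" for a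
    using height_le[OF that] at_height_height[OF that] by (simp add: truncate_height_def)
  show "at_height d (\<lambda>_. 0) \<in> Obj ?K"
    by (simp add: at_height_in_Obj_iff)
  show "thin_cat.has_arr ?K (truncate_height d 0 a) (at_height d (\<lambda>_. 0))" if "a \<in> Obj ?K" for a
    using has_arr_at_height[of "\<lambda>_. 0" "\<lambda>_. 0"] fence_le_refl \<open>at_height d (\<lambda>_. 0) \<in> Obj ?K\<close>
    by (simp add: truncate_height_def)
qed

end

theorem mainTheorem15:
  shows "strong_coinitial (full_subcat (FCat (Nmon n)) (Tset n)) (FCat (Nmon n)) id id"
  unfolding strong_coinitial_def
proof
  fix d
  assume "d \<in> Obj (FCat (Nmon n))"
  then have "d \<in> carrier (Nmon n)"
    by (simp add: FCat_def)
  then show "connected_cat (T_comma n d)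
      \<and> (\<forall>q>0. colim_Z_vanishes (T_comma n d) q)"
    using thin_cat.connected_if_zigzag_contraction[OF thin_cat_inclusion_comma_Nmon]
      thin_cat.colim_Z_vanishes_if_zigzag_contraction[OF thin_cat_inclusion_comma_Nmon]
      zigzag_contraction_truncate_height by blast
qed

end
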